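(* For every $k\in\mathbb{N}$, $k\ge 2$, there exists a family of $k$-uniform hypergraph properties $f_v$ on $v$ vertices such that $s(f_v)=\Theta(v^{\lceil k/2\rceil})$ and $bs(f_v)=\Theta(v^k)$. In particular, for even $k$, $bs(f_v)=\Theta(s(f_v)^2)$.
   Context: A $k$-uniform hypergraph on $[v]$ is identified with a string in $\{0,1\}^{\binom vk}$. A $k$-uniform hypergraph property is a Boolean function on such strings invariant under all permutations of $[v]$. $s(f)$ is the maximum over inputs of the number of single-bit flips changing the value; $bs(f)$ is the maximum over inputs $x$ of the maximum number of pairwise disjoint sets of coordinates whose simultaneous flip changes $f(x)$. *)

theory Defs
  imports Main "HOL-Library.Landau_Symbols" "HOL-Combinatorics.Permutations"
begin

text \<open>An input string in {0,1}^(v choose k) is identified with the set of coordinates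
  equal to 1, i.e. a set E of k-subsets of [v] (the hyperedges).\<close>

definition hedges :: "nat \<Rightarrow> nat \<Rightarrow> nat set set" where
  "hedges k v = {S. S \<subseteq> {0..<v} \<and> card S = k}"

definition hinputs :: "nat \<Rightarrow> nat \<Rightarrow> nat set set set" where
  "hinputs k v = Pow (hedges k v)"

definition hyper_property :: "nat \<Rightarrow> nat \<Rightarrow> (nat set set \<Rightarrow> bool) \<Rightarrow> bool" where
  "hyper_property k v f \<longleftrightarrow>
     (\<forall>(\<sigma>::nat \<Rightarrow> nat) E. \<sigma> permutes {0..<v} \<and> E \<in> hinputs k v \<longrightarrow> f ((\<lambda>S. \<sigma> ` S) ` E) = f E)"

definition flip :: "nat set set \<Rightarrow> nat set set \<Rightarrow> nat set set" where
  "flip E B = (E - B) \<union> (B - E)"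

definition sensitivity :: "nat \<Rightarrow> nat \<Rightarrow> (nat set set \<Rightarrow> bool) \<Rightarrow> nat" where
  "sensitivity k v f =
     Max ((\<lambda>E. card {e \<in> hedges k v. f (flip E {e}) \<noteq> f E}) ` hinputs k v)"

definition block_sensitivity :: "nat \<Rightarrow> nat \<Rightarrow> (nat set set \<Rightarrow> bool) \<Rightarrow> nat" where
  "block_sensitivity k v f =
     Max {card \<B> | E \<B>. E \<in> hinputs k v \<and> \<B> \<subseteq> Pow (hedges k v) \<and>
            pairwise disjnt \<B> \<and> (\<forall>B\<in>\<B>. f (flip E B) \<noteq> f E)}"

end

theory Submission
  imports Defs "HOL-Number_Theory.Cong"
begin

text \<open>The property asks for an isolated clique: a \<open>(k + 1)\<close>-set \<open>W\<close> all of whose \<open>k\<close>-subsets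
  are edges, such that every edge meeting \<open>W\<close> in at least \<open>k div 2\<close> vertices lies inside \<open>W\<close>.
  At an input with an isolated clique \<open>W\<close>, only edges meeting \<open>W\<close> in \<open>k div 2\<close> vertices are
  sensitive, and there are \<open>O(v^\<lceil>k/2\<rceil>)\<close> of them. At an input without one, every sensitive edge
  creates an isolated clique; two different created cliques meet in fewer than \<open>k div 2\<close>
  vertices, so there are \<open>O(v^\<lfloor>k/2\<rfloor>)\<close> of them, and each is created by at most \<open>k + 2\<close> edges.
  Conversely, the clique on \<open>{0..k}\<close> is destroyed by each edge made of \<open>k div 2\<close> clique vertices
  and \<open>\<lceil>k/2\<rceil>\<close> outside vertices. For block sensitivity, the empty hypergraph is turned into a
  positive input by filling in any of \<open>\<Omega>(v^k)\<close> pairwise edge-disjoint cliques, obtained by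
  attaching to each \<open>k\<close>-subset \<open>S\<close> of the first half of the vertices an apex in the second
  half determined by \<open>\<Sum>S\<close>.\<close>

definition isolated_clique :: "nat \<Rightarrow> nat \<Rightarrow> nat set \<Rightarrow> nat set set \<Rightarrow> bool" where
  "isolated_clique k v W E \<longleftrightarrow> W \<subseteq> {0..<v} \<and> card W = Suc k \<and>
     (\<forall>e. e \<subseteq> W \<and> card e = k \<longrightarrow> e \<in> E) \<and>
     (\<forall>e\<in>E. k div 2 \<le> card (e \<inter> W) \<longrightarrow> e \<subseteq> W)"

definition has_isolated_clique :: "nat \<Rightarrow> nat \<Rightarrow> nat set set \<Rightarrow> bool" where
  "has_isolated_clique k v E \<longleftrightarrow> (\<exists>W. isolated_clique k v W E)"

lemma isolated_clique_card: "isolated_clique k v W E \<Longrightarrow> card W = Suc k"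
  unfolding isolated_clique_def by blast

lemma isolated_clique_finite: "isolated_clique k v W E \<Longrightarrow> finite W"
  using isolated_clique_card card_ge_0_finite by fastforce

lemma isolated_clique_subset_edge:
  "isolated_clique k v W E \<Longrightarrow> e \<subseteq> W \<Longrightarrow> card e = k \<Longrightarrow> e \<in> E"
  unfolding isolated_clique_def by blast

lemma isolated_clique_isolated:
  "isolated_clique k v W E \<Longrightarrow> e \<in> E \<Longrightarrow> k div 2 \<le> card (e \<inter> W) \<Longrightarrow> e \<subseteq> W"
  unfolding isolated_clique_def by blast

lemma isolated_clique_permutes:
  assumes cl: "isolated_clique k v W E" and \<sigma>: "\<sigma> permutes {0..<v}"
  shows "isolated_clique k v (\<sigma> ` W) ((`) \<sigma> ` E)"
proof -
  have inj: "inj \<sigma>" using \<sigma> permutes_inj by blast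
  have "\<sigma> ` W \<subseteq> {0..<v}"
    using cl \<sigma> permutes_image unfolding isolated_clique_def by blast
  moreover have "card (\<sigma> ` W) = Suc k"
    using cl inj by (simp add: isolated_clique_card card_image inj_on_subset)
  moreover have "e \<in> (`) \<sigma> ` E" if "e \<subseteq> \<sigma> ` W" "card e = k" for e
  proof -
    obtain A where A: "A \<subseteq> W" "e = \<sigma> ` A" using \<open>e \<subseteq> \<sigma> ` W\<close> subset_image_iff by metis
    have "card A = k" using A \<open>card e = k\<close> inj by (simp add: card_image inj_on_subset)
    then show ?thesis using A isolated_clique_subset_edge[OF cl] by blast
  qed
  moreover have "\<sigma> ` e \<subseteq> \<sigma> ` W" if "e \<in> E" "k div 2 \<le> card (\<sigma> ` e \<inter> \<sigma> ` W)" for e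
  proof -
    have "card (\<sigma> ` e \<inter> \<sigma> ` W) = card (e \<inter> W)"
      using inj by (simp add: image_Int[symmetric] card_image inj_on_subset)
    then show ?thesis using that isolated_clique_isolated[OF cl] by (metis image_mono)
  qed
  ultimately show ?thesis unfolding isolated_clique_def by blast
qed

lemma hyper_property_has_isolated_clique: "hyper_property k v (has_isolated_clique k v)"
  unfolding hyper_property_def
proof (intro allI impI)
  fix \<sigma> :: "nat \<Rightarrow> nat" and E
  assume "\<sigma> permutes {0..<v} \<and> E \<in> hinputs k v"
  then have \<sigma>: "\<sigma> permutes {0..<v}" by blast
  have "(`) (inv \<sigma>) ` (`) \<sigma> ` E = E"
    using permutes_inj[OF \<sigma>] by (simp add: image_comp image_inv_f_f)
  then have "has_isolated_clique k v ((`) \<sigma> ` E) \<Longrightarrow> has_isolated_clique k v E"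
    using isolated_clique_permutes[OF _ permutes_inv[OF \<sigma>]]
    unfolding has_isolated_clique_def by metis
  then show "has_isolated_clique k v ((`) \<sigma> ` E) = has_isolated_clique k v E"
    using isolated_clique_permutes[OF _ \<sigma>] unfolding has_isolated_clique_def by blast
qed

lemma flip_singleton_iff: "x \<in> flip E {e} \<longleftrightarrow> (x \<in> E \<longleftrightarrow> x \<noteq> e)"
  unfolding flip_def by auto

lemma isolated_clique_flip_far:
  assumes far: "card (e \<inter> W) < k div 2"
  shows "isolated_clique k v W (flip E {e}) \<longleftrightarrow> isolated_clique k v W E"
proof -
  have same: "e' \<in> flip E {e} \<longleftrightarrow> e' \<in> E" if "k div 2 \<le> card (e' \<inter> W)" for e'
    using that far by (auto simp: flip_singleton_iff)
  have "k div 2 \<le> card (e' \<inter> W)" if "e' \<subseteq> W" "card e' = k" for e'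
    using that by (simp add: Int_absorb2)
  then have "(\<forall>e'. e' \<subseteq> W \<and> card e' = k \<longrightarrow> e' \<in> flip E {e}) \<longleftrightarrow>
      (\<forall>e'. e' \<subseteq> W \<and> card e' = k \<longrightarrow> e' \<in> E)"
    using same by blast
  moreover have "(\<forall>e'\<in>flip E {e}. k div 2 \<le> card (e' \<inter> W) \<longrightarrow> e' \<subseteq> W) \<longleftrightarrow>
      (\<forall>e'\<in>E. k div 2 \<le> card (e' \<inter> W) \<longrightarrow> e' \<subseteq> W)"
    using same by blast
  ultimately show ?thesis
    unfolding isolated_clique_def by simp
qed

lemma finite_hedges: "finite (hedges k v)"
  unfolding hedges_def by (rule finite_subset[of _ "Pow {0..<v}"]) auto

lemma card_hedges: "card (hedges k v) = v choose k"
  unfolding hedges_def by (simp add: n_subsets)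

lemma finite_hinputs: "finite (hinputs k v)"
  unfolding hinputs_def using finite_hedges by simp

lemma card_hedges_supset_le:
  assumes "finite T"
  shows "card {e \<in> hedges k v. T \<subseteq> e} \<le> v choose (k - card T)"
proof -
  have "inj_on (\<lambda>e. e - T) {e \<in> hedges k v. T \<subseteq> e}"
    by (rule inj_onI) auto
  moreover have "(\<lambda>e. e - T) ` {e \<in> hedges k v. T \<subseteq> e} \<subseteq> hedges (k - card T) v"
    using assms unfolding hedges_def by (auto simp: card_Diff_subset)
  ultimately have "card {e \<in> hedges k v. T \<subseteq> e} \<le> card (hedges (k - card T) v)"
    by (intro card_inj_on_le finite_hedges)
  then show ?thesis by (simp add: card_hedges)
qed

lemma card_hedges_meeting_le:
  assumes "finite W"
  shows "card {e \<in> hedges k v. t \<le> card (e \<inter> W)} \<le> (card W choose t) * (v choose (k - t))"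
proof -
  let ?Ts = "{T. T \<subseteq> W \<and> card T = t}"
  have "{e \<in> hedges k v. t \<le> card (e \<inter> W)} \<subseteq> (\<Union>T\<in>?Ts. {e \<in> hedges k v. T \<subseteq> e})"
  (is "_ \<subseteq> ?U")
  proof
    fix e assume e: "e \<in> {e \<in> hedges k v. t \<le> card (e \<inter> W)}"
    then have "t \<le> card (e \<inter> W)" by simp
    then obtain T where "T \<subseteq> e \<inter> W" "card T = t"
      by (meson obtain_subset_with_card_n)
    then show "e \<in> (\<Union>T\<in>?Ts. {e \<in> hedges k v. T \<subseteq> e})" using e by blast
  qed
  moreover have "finite ?U" by (rule finite_subset[OF _ finite_hedges]) blast
  ultimately have "card {e \<in> hedges k v. t \<le> card (e \<inter> W)} \<le> card ?U"
    by (simp add: card_mono)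
  also have "\<dots> \<le> (\<Sum>T\<in>?Ts. card {e \<in> hedges k v. T \<subseteq> e})"
    by (rule card_UN_le) (use assms in simp)
  also have "\<dots> \<le> (\<Sum>T\<in>?Ts. v choose (k - t))"
  proof (rule sum_mono)
    fix T assume "T \<in> ?Ts"
    then have "finite T" "card T = t" using finite_subset[OF _ assms] by auto
    then show "card {e \<in> hedges k v. T \<subseteq> e} \<le> v choose (k - t)"
      using card_hedges_supset_le by metis
  qed
  also have "\<dots> = (card W choose t) * (v choose (k - t))"
    using assms by (simp add: n_subsets)
  finally show ?thesis .
qed

lemma card_le_choose_if_small_intersections:
  assumes A: "finite A" and \<W>: "\<W> \<subseteq> Pow A" "\<And>W. W \<in> \<W> \<Longrightarrow> t \<le> card W"
    and small: "\<And>W1 W2. W1 \<in> \<W> \<Longrightarrow> W2 \<in> \<W> \<Longrightarrow> W1 \<noteq> W2 \<Longrightarrow> card (W1 \<inter> W2) < t"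
  shows "card \<W> \<le> card A choose t"
proof -
  have "\<exists>T. T \<subseteq> W \<and> card T = t" if "W \<in> \<W>" for W
    using \<W>(2)[OF that] by (meson obtain_subset_with_card_n)
  then obtain T where T: "\<And>W. W \<in> \<W> \<Longrightarrow> T W \<subseteq> W \<and> card (T W) = t" by metis
  have "inj_on T \<W>"
  proof (rule inj_onI, rule ccontr)
    fix W1 W2 assume W: "W1 \<in> \<W>" "W2 \<in> \<W>" "T W1 = T W2" "W1 \<noteq> W2"
    have "finite (W1 \<inter> W2)" using W(1) \<W>(1) A finite_subset by blast
    moreover have "T W1 \<subseteq> W1 \<inter> W2" using T W(1-3) by blast
    ultimately have "t \<le> card (W1 \<inter> W2)" using T[OF W(1)] card_mono by metis
    then show False using small[OF W(1,2,4)] by simp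
  qed
  moreover have "T ` \<W> \<subseteq> {S. S \<subseteq> A \<and> card S = t}" using T \<W>(1) by blast
  ultimately have "card \<W> \<le> card {S. S \<subseteq> A \<and> card S = t}"
    using A by (intro card_inj_on_le) auto
  then show ?thesis using A by (simp add: n_subsets)
qed

lemma obtain_two_distinct:
  assumes "2 \<le> card A"
  obtains x y where "x \<in> A" "y \<in> A" "x \<noteq> y"
proof -
  obtain S where "S \<subseteq> A" "card S = 2" using assms obtain_subset_with_card_n by meson
  then show ?thesis using that by (auto simp: card_2_iff)
qed

definition sensitive_edges ::
    "nat \<Rightarrow> nat \<Rightarrow> (nat set set \<Rightarrow> bool) \<Rightarrow> nat set set \<Rightarrow> nat set set" where
  "sensitive_edges k v f E = {e \<in> hedges k v. f (flip E {e}) \<noteq> f E}"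

lemma sensitivity_ge: "E \<in> hinputs k v \<Longrightarrow> card (sensitive_edges k v f E) \<le> sensitivity k v f"
  unfolding sensitivity_def sensitive_edges_def by (rule Max_ge) (use finite_hinputs in auto)

lemma sensitivity_le:
  "(\<And>E. E \<in> hinputs k v \<Longrightarrow> card (sensitive_edges k v f E) \<le> b) \<Longrightarrow> sensitivity k v f \<le> b"
  unfolding sensitivity_def sensitive_edges_def
  by (rule Max.boundedI) (auto simp: hinputs_def finite_hedges)

lemma finite_sensitive_edges: "finite (sensitive_edges k v f E)"
  unfolding sensitive_edges_def using finite_hedges by simp

lemma sensitive_edges_at_isolated_clique:
  assumes "isolated_clique k v W E"
  shows "sensitive_edges k v (has_isolated_clique k v) E \<subseteq> {e \<in> hedges k v. k div 2 \<le> card (e \<inter> W)}"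
proof
  fix e assume e: "e \<in> sensitive_edges k v (has_isolated_clique k v) E"
  have "k div 2 \<le> card (e \<inter> W)"
  proof (rule ccontr)
    assume "\<not> ?thesis"
    then have "isolated_clique k v W (flip E {e})"
      using isolated_clique_flip_far assms by (metis not_le)
    then show False
      using e assms unfolding sensitive_edges_def has_isolated_clique_def by blast
  qed
  then show "e \<in> {e \<in> hedges k v. k div 2 \<le> card (e \<inter> W)}"
    using e unfolding sensitive_edges_def by blast
qed

lemma card_sensitive_edges_at_isolated_clique:
  assumes "isolated_clique k v W E"
  shows "card (sensitive_edges k v (has_isolated_clique k v) E)
           \<le> (Suc k choose (k div 2)) * (v choose (k - k div 2))"
proof -
  have "card (sensitive_edges k v (has_isolated_clique k v) E)
          \<le> card {e \<in> hedges k v. k div 2 \<le> card (e \<inter> W)}"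
    using sensitive_edges_at_isolated_clique[OF assms] finite_hedges by (intro card_mono) auto
  also have "\<dots> \<le> (Suc k choose (k div 2)) * (v choose (k - k div 2))"
    using card_hedges_meeting_le isolated_clique_finite[OF assms] isolated_clique_card[OF assms]
    by metis
  finally show ?thesis .
qed

text \<open>Only the \<open>k + 1\<close> subsets of \<open>W\<close> and at most one edge of \<open>E\<close> sticking out of \<open>W\<close>
  can turn \<open>W\<close> into an isolated clique.\<close>

lemma card_edges_creating_isolated_clique:
  assumes no_clique: "\<not> has_isolated_clique k v E" and W: "card W = Suc k"
  shows "card {e \<in> hedges k v. isolated_clique k v W (flip E {e})} \<le> k + 2"
proof -
  let ?A = "{e \<in> hedges k v. isolated_clique k v W (flip E {e})}"
  let ?K = "{e. e \<subseteq> W \<and> card e = k}"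
  have finW: "finite W" using W card_ge_0_finite by force
  have finA: "finite ?A" using finite_hedges by simp
  have sticking_out: "e \<in> E \<and> k div 2 \<le> card (e \<inter> W)" if "e \<in> ?A" "\<not> e \<subseteq> W" for e
  proof -
    have cl: "isolated_clique k v W (flip E {e})" using that by blast
    then have far: "k div 2 \<le> card (e \<inter> W)"
      using isolated_clique_flip_far no_clique unfolding has_isolated_clique_def by (metis not_le)
    have "e \<in> E"
      using isolated_clique_isolated[OF cl _ far] that(2) by (auto simp: flip_singleton_iff)
    then show ?thesis using far by blast
  qed
  have "e1 = e2" if e1: "e1 \<in> ?A - ?K" and e2: "e2 \<in> ?A - ?K" for e1 e2
  proof (rule ccontr)
    assume "e1 \<noteq> e2"
    have out: "\<not> e1 \<subseteq> W" "\<not> e2 \<subseteq> W" using e1 e2 unfolding hedges_def by auto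
    have cl1: "isolated_clique k v W (flip E {e1})" using e1 by blast
    have "e2 \<in> E" "k div 2 \<le> card (e2 \<inter> W)" using sticking_out e2 out(2) by blast+
    then have "e2 \<subseteq> W"
      using isolated_clique_isolated[OF cl1] \<open>e1 \<noteq> e2\<close> by (simp add: flip_singleton_iff)
    then show False using out(2) by blast
  qed
  then have "card (?A - ?K) \<le> 1"
    using card_le_Suc0_iff_eq[OF finite_Diff[OF finA]] by simp
  moreover have "card ?K = Suc k" using n_subsets[OF finW, of k] W by simp
  moreover have "card ?A \<le> card ?K + card (?A - ?K)"
  proof -
    have "card ?A \<le> card (?K \<union> (?A - ?K))"
      by (rule card_mono) (use finW finA in auto)
    also have "\<dots> \<le> card ?K + card (?A - ?K)" by (rule card_Un_le)
    finally show ?thesis .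
  qed
  ultimately show ?thesis by linarith
qed

lemma obtain_two_deletions_keeping_overlap:
  assumes fin: "finite W2" and card_eq: "card W1 = card W2" and ne: "W1 \<noteq> W2"
    and t: "t \<le> card (W1 \<inter> W2)" "t + 2 \<le> card W2" and three: "3 \<le> card W2"
  obtains y1 y2 where "y1 \<in> W2" "y2 \<in> W2" "y1 \<noteq> y2"
    "\<And>y. y \<in> {y1, y2} \<Longrightarrow> \<not> W2 - {y} \<subseteq> W1 \<and> t \<le> card ((W2 - {y}) \<inter> W1)"
proof -
  have fin1: "finite W1" using card_eq three card_ge_0_finite by force
  consider "card (W2 - W1) = 0" | "card (W2 - W1) = 1" | "2 \<le> card (W2 - W1)" by linarith
  then show ?thesis
  proof cases
    case 1
    then have "W2 \<subseteq> W1" using fin by auto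
    then show ?thesis using ne card_eq fin1 card_subset_eq by metis
  next
    case 2
    then obtain b where b: "W2 - W1 = {b}" using card_1_singletonE by blast
    have "card W2 = card (W2 \<inter> W1) + card (W2 - W1)" by (rule card_Int_Diff[OF fin])
    then have common: "card (W2 \<inter> W1) = card W2 - 1" using 2 by simp
    then obtain y1 y2 where y: "y1 \<in> W2 \<inter> W1" "y2 \<in> W2 \<inter> W1" "y1 \<noteq> y2"
      using three obtain_two_distinct[of "W2 \<inter> W1"] by force
    have "\<not> W2 - {y} \<subseteq> W1 \<and> t \<le> card ((W2 - {y}) \<inter> W1)" if "y \<in> W2 \<inter> W1" for y
    proof
      show "\<not> W2 - {y} \<subseteq> W1" using b that by auto
      have "(W2 - {y}) \<inter> W1 = (W2 \<inter> W1) - {y}" by auto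
      then show "t \<le> card ((W2 - {y}) \<inter> W1)" using common that fin1 t(2) by simp
    qed
    then show ?thesis using that y by blast
  next
    case 3
    then obtain y1 y2 where y: "y1 \<in> W2 - W1" "y2 \<in> W2 - W1" "y1 \<noteq> y2"
      by (rule obtain_two_distinct)
    have "\<not> W2 - {y} \<subseteq> W1 \<and> t \<le> card ((W2 - {y}) \<inter> W1)" if "y \<in> {y1, y2}" for y
    proof
      show "\<not> W2 - {y} \<subseteq> W1" using y that by auto
      have "(W2 - {y}) \<inter> W1 = W1 \<inter> W2" using y that by auto
      then show "t \<le> card ((W2 - {y}) \<inter> W1)" using t(1) by simp
    qed
    then show ?thesis using that y by blast
  qed
qed

lemma flip_singleton_difference:
  "x \<in> flip E {e2} \<Longrightarrow> x \<notin> flip E {e1} \<Longrightarrow> x \<in> {e1, e2}"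
  by (auto simp: flip_singleton_iff)

text \<open>If the cliques overlapped in \<open>k div 2\<close> vertices, two \<open>k\<close>-subsets of \<open>W2\<close> and one of
  \<open>W1\<close> would each violate the isolation of the other clique, so all three would be among the
  two flipped edges.\<close>

lemma card_Int_isolated_cliques_of_flips:
  assumes k: "2 \<le> k" and cl1: "isolated_clique k v W1 (flip E {e1})"
    and cl2: "isolated_clique k v W2 (flip E {e2})" and ne: "W1 \<noteq> W2"
  shows "card (W1 \<inter> W2) < k div 2"
proof (rule ccontr)
  assume "\<not> ?thesis"
  then have t: "k div 2 \<le> card (W1 \<inter> W2)" "k div 2 \<le> card (W2 \<inter> W1)"
    by (simp_all add: Int_commute)
  have card1: "card W1 = Suc k" and card2: "card W2 = Suc k"
    using cl1 cl2 isolated_clique_card by blast+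
  have fin1: "finite W1" and fin2: "finite W2"
    using cl1 cl2 isolated_clique_finite by blast+
  have flipped: "Wa - {y} \<in> {eb, ea}"
    if cla: "isolated_clique k v Wa (flip E {ea})" and clb: "isolated_clique k v Wb (flip E {eb})"
      and y: "y \<in> Wa" "\<not> Wa - {y} \<subseteq> Wb"
      "k div 2 \<le> card ((Wa - {y}) \<inter> Wb)" for Wa Wb ea eb y
  proof -
    have "card (Wa - {y}) = k"
      using y(1) isolated_clique_card[OF cla] isolated_clique_finite[OF cla] by simp
    then have "Wa - {y} \<in> flip E {ea}" using isolated_clique_subset_edge[OF cla] by blast
    moreover have "Wa - {y} \<notin> flip E {eb}" using isolated_clique_isolated[OF clb] y(2,3) by blast
    ultimately show ?thesis by (rule flip_singleton_difference)
  qed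
  have sizes: "card W1 = card W2" "k div 2 + 2 \<le> card W2" "3 \<le> card W2"
    using card1 card2 k by simp_all
  obtain y1 y2 where y: "y1 \<in> W2" "y2 \<in> W2" "y1 \<noteq> y2"
    "\<And>y. y \<in> {y1, y2} \<Longrightarrow> \<not> W2 - {y} \<subseteq> W1 \<and> k div 2 \<le> card ((W2 - {y}) \<inter> W1)"
    using obtain_two_deletions_keeping_overlap[OF fin2 sizes(1) ne t(1) sizes(2,3)] by blast
  obtain z z' where z: "z \<in> W1" "z' \<in> W1" "z \<noteq> z'"
    "\<And>y. y \<in> {z, z'} \<Longrightarrow> \<not> W1 - {y} \<subseteq> W2 \<and> k div 2 \<le> card ((W1 - {y}) \<inter> W2)"
    using obtain_two_deletions_keeping_overlap[OF fin1 sizes(1)[symmetric] ne[symmetric] t(2)]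
      sizes card1 by auto
  have "W2 - {y1} \<in> {e1, e2}" "W2 - {y2} \<in> {e1, e2}"
    using flipped[OF cl2 cl1] y by blast+
  moreover have "W1 - {z} \<in> {e2, e1}" using flipped[OF cl1 cl2] z by blast
  moreover have "W2 - {y1} \<noteq> W2 - {y2}" using y(1-3) by blast
  moreover have "W1 - {z} \<noteq> W2 - {y1}" "W1 - {z} \<noteq> W2 - {y2}"
    using y(4) z(4) by blast+
  ultimately show False by blast
qed

lemma card_sensitive_edges_without_isolated_clique:
  assumes k: "2 \<le> k" and no_clique: "\<not> has_isolated_clique k v E"
  shows "card (sensitive_edges k v (has_isolated_clique k v) E) \<le> (k + 2) * (v choose (k div 2))"
proof -
  define \<W> where "\<W> = {W. \<exists>e\<in>hedges k v. isolated_clique k v W (flip E {e})}"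
  define creating where "creating W = {e \<in> hedges k v. isolated_clique k v W (flip E {e})}" for W
  have \<W>_Pow: "\<W> \<subseteq> Pow {0..<v}" and \<W>_card: "\<And>W. W \<in> \<W> \<Longrightarrow> card W = Suc k"
    unfolding \<W>_def isolated_clique_def by auto
  have card_\<W>: "card \<W> \<le> card {0..<v} choose (k div 2)"
  proof (rule card_le_choose_if_small_intersections[OF _ \<W>_Pow])
    show "k div 2 \<le> card W" if "W \<in> \<W>" for W using \<W>_card[OF that] by simp
    show "card (W1 \<inter> W2) < k div 2" if "W1 \<in> \<W>" "W2 \<in> \<W>" "W1 \<noteq> W2" for W1 W2
      using that card_Int_isolated_cliques_of_flips[OF k] unfolding \<W>_def by blast
  qed simp
  have "sensitive_edges k v (has_isolated_clique k v) E \<subseteq> (\<Union>W\<in>\<W>. creating W)"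
    using no_clique unfolding sensitive_edges_def has_isolated_clique_def \<W>_def creating_def
    by blast
  then have "card (sensitive_edges k v (has_isolated_clique k v) E) \<le> card (\<Union>W\<in>\<W>. creating W)"
    by (rule card_mono[rotated]) (rule finite_subset[OF _ finite_hedges], auto simp: creating_def)
  also have "\<dots> \<le> (\<Sum>W\<in>\<W>. card (creating W))"
    using \<W>_Pow by (intro card_UN_le) (simp add: finite_subset)
  also have "\<dots> \<le> (\<Sum>W\<in>\<W>. k + 2)"
    unfolding creating_def
    using card_edges_creating_isolated_clique[OF no_clique \<W>_card] by (rule sum_mono)
  also have "\<dots> = (k + 2) * card \<W>" by simp
  also have "\<dots> \<le> (k + 2) * (v choose (k div 2))" by (rule mult_le_mono2) (use card_\<W> in simp)
  finally show ?thesis .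
qed

lemma sensitivity_has_isolated_clique_le:
  assumes "2 \<le> k"
  shows "sensitivity k v (has_isolated_clique k v)
           \<le> (Suc k choose (k div 2)) * (v choose (k - k div 2)) + (k + 2) * (v choose (k div 2))"
proof (rule sensitivity_le)
  fix E
  show "card (sensitive_edges k v (has_isolated_clique k v) E)
          \<le> (Suc k choose (k div 2)) * (v choose (k - k div 2)) + (k + 2) * (v choose (k div 2))"
  proof (cases "has_isolated_clique k v E")
    case True
    then obtain W where "isolated_clique k v W E" unfolding has_isolated_clique_def by blast
    then show ?thesis using card_sensitive_edges_at_isolated_clique by (meson trans_le_add1)
  next
    case False
    then show ?thesis using card_sensitive_edges_without_isolated_clique[OF assms]
      by (meson trans_le_add2)
  qed
qed

lemma isolated_clique_ksubsets:
  "W \<subseteq> {0..<v} \<Longrightarrow> card W = Suc k \<Longrightarrow> isolated_clique k v W {e. e \<subseteq> W \<and> card e = k}"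
  unfolding isolated_clique_def by blast

lemma not_has_isolated_clique_empty: "\<not> has_isolated_clique k v {}"
proof
  assume "has_isolated_clique k v {}"
  then obtain W where cl: "isolated_clique k v W {}" unfolding has_isolated_clique_def by blast
  then obtain e where "e \<subseteq> W" "card e = k"
    using isolated_clique_card obtain_subset_with_card_n by (metis le_SucI order_refl)
  then show False using isolated_clique_subset_edge[OF cl] by blast
qed

text \<open>Adding \<open>e\<close> destroys the isolation of \<open>W0\<close>, and any other \<open>(k + 1)\<close>-set \<open>W\<close> has a vertex
  \<open>z\<close> outside \<open>W0\<close>; the at least two \<open>k\<close>-subsets of \<open>W\<close> through \<open>z\<close> would all have to be \<open>e\<close>.\<close>

lemma not_has_isolated_clique_insert:
  assumes W0: "card W0 = Suc k" and k: "2 \<le> k"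
    and out: "\<not> e \<subseteq> W0" and meet: "k div 2 \<le> card (e \<inter> W0)"
  shows "\<not> has_isolated_clique k v (insert e {e'. e' \<subseteq> W0 \<and> card e' = k})"
proof
  let ?E = "insert e {e'. e' \<subseteq> W0 \<and> card e' = k}"
  assume "has_isolated_clique k v ?E"
  then obtain W where cl: "isolated_clique k v W ?E" unfolding has_isolated_clique_def by blast
  have card_W: "card W = Suc k" and fin: "finite W"
    using isolated_clique_card[OF cl] isolated_clique_finite[OF cl] by blast+
  show False
  proof (cases "W \<subseteq> W0")
    case True
    then have "W = W0" using card_subset_eq W0 card_W card_ge_0_finite by (metis zero_less_Suc)
    then show False using isolated_clique_isolated[OF cl, of e] out meet by simp
  next
    case False
    then obtain z where z: "z \<in> W" "z \<notin> W0" by blast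
    have "2 \<le> card (W - {z})" using card_W fin z k by simp
    then obtain a b where ab: "a \<in> W - {z}" "b \<in> W - {z}" "a \<noteq> b"
      by (rule obtain_two_distinct)
    have "W - {x} = e" if "x \<in> W - {z}" for x
    proof -
      have "card (W - {x}) = k" using that card_W fin by simp
      then have "W - {x} \<in> ?E" using isolated_clique_subset_edge[OF cl] by blast
      moreover have "\<not> W - {x} \<subseteq> W0" using z that by blast
      ultimately show ?thesis by blast
    qed
    then have "W - {a} = W - {b}" using ab(1,2) by metis
    then show False using ab by blast
  qed
qed

lemma sensitivity_has_isolated_clique_ge:
  assumes k: "2 \<le> k" and v: "Suc k \<le> v"
  shows "(v - Suc k) choose (k - k div 2) \<le> sensitivity k v (has_isolated_clique k v)"
proof -
  define W0 where "W0 = {0..<Suc k}"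
  define E0 where "E0 = {e. e \<subseteq> W0 \<and> card e = k}"
  define T0 where "T0 = {0..<k div 2}"
  define \<R> where "\<R> = {R. R \<subseteq> {Suc k..<v} \<and> card R = k - k div 2}"
  have W0: "W0 \<subseteq> {0..<v}" "card W0 = Suc k" unfolding W0_def using v by auto
  have E0: "E0 \<in> hinputs k v" unfolding hinputs_def hedges_def E0_def using W0 by auto
  have clique: "has_isolated_clique k v E0"
    unfolding has_isolated_clique_def E0_def using isolated_clique_ksubsets[OF W0] by blast
  have disjoint: "T0 \<inter> R = {}" if "R \<in> \<R>" for R
    using that unfolding \<R>_def T0_def by fastforce
  have "T0 \<union> R \<in> sensitive_edges k v (has_isolated_clique k v) E0" if R: "R \<in> \<R>" for R
  proof -
    have R_sub: "R \<subseteq> {Suc k..<v}" and card_R: "card R = k - k div 2" using R unfolding \<R>_def by auto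
    have "finite R" using R_sub finite_subset by blast
    then have "card (T0 \<union> R) = k"
      using card_Un_disjoint[of T0 R] disjoint[OF R] card_R unfolding T0_def by simp
    moreover have "T0 \<union> R \<subseteq> {0..<v}" using R_sub v unfolding T0_def by auto
    ultimately have hedge: "T0 \<union> R \<in> hedges k v" unfolding hedges_def by simp
    obtain r where "r \<in> R" using card_R k by fastforce
    then have out: "\<not> T0 \<union> R \<subseteq> W0" using R_sub unfolding W0_def by fastforce
    have "T0 \<subseteq> (T0 \<union> R) \<inter> W0" unfolding T0_def W0_def by auto
    then have meet: "k div 2 \<le> card ((T0 \<union> R) \<inter> W0)"
      using card_mono[of "(T0 \<union> R) \<inter> W0" T0] unfolding T0_def W0_def by simp
    have "flip E0 {T0 \<union> R} = insert (T0 \<union> R) E0" using out unfolding flip_def E0_def by auto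
    then have "\<not> has_isolated_clique k v (flip E0 {T0 \<union> R})"
      using not_has_isolated_clique_insert[OF W0(2) k out meet] unfolding E0_def by simp
    then show ?thesis using clique hedge unfolding sensitive_edges_def by simp
  qed
  moreover have "inj_on (\<lambda>R. T0 \<union> R) \<R>"
    using disjoint by (intro inj_onI) blast
  ultimately have "card \<R> \<le> card (sensitive_edges k v (has_isolated_clique k v) E0)"
    by (intro card_inj_on_le finite_sensitive_edges) blast+
  also have "\<dots> \<le> sensitivity k v (has_isolated_clique k v)" by (rule sensitivity_ge[OF E0])
  finally show ?thesis unfolding \<R>_def by (simp add: n_subsets)
qed

lemma card_sensitive_blocks_le:
  assumes \<B>: "\<B> \<subseteq> Pow (hedges k v)" "pairwise disjnt \<B>" and sensitive: "\<forall>B\<in>\<B>. f (flip E B) \<noteq> f E"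
  shows "card \<B> \<le> v choose k"
proof -
  have fin: "finite B" if "B \<in> \<B>" for B using that \<B>(1) finite_hedges finite_subset by blast
  have nonempty: "B \<noteq> {}" if "B \<in> \<B>" for B
  proof
    assume "B = {}"
    then have "flip E B = E" unfolding flip_def by simp
    then show False using sensitive that by metis
  qed
  have "card \<B> = (\<Sum>B\<in>\<B>. 1)" by simp
  also have "\<dots> \<le> (\<Sum>B\<in>\<B>. card B)"
  proof (rule sum_mono)
    fix B assume "B \<in> \<B>"
    then show "1 \<le> card B" using fin nonempty by (simp add: Suc_le_eq card_gt_0_iff)
  qed
  also have "\<dots> = card (\<Union>\<B>)" by (rule card_Union_disjoint[OF \<B>(2) fin, symmetric])
  also have "\<dots> \<le> card (hedges k v)" by (rule card_mono[OF finite_hedges]) (use \<B>(1) in blast)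
  finally show ?thesis by (simp add: card_hedges)
qed

definition sensitive_block_sizes :: "nat \<Rightarrow> nat \<Rightarrow> (nat set set \<Rightarrow> bool) \<Rightarrow> nat set" where
  "sensitive_block_sizes k v f =
     {card \<B> | E \<B>. E \<in> hinputs k v \<and> \<B> \<subseteq> Pow (hedges k v) \<and>
        pairwise disjnt \<B> \<and> (\<forall>B\<in>\<B>. f (flip E B) \<noteq> f E)}"

lemma block_sensitivity_eq_Max: "block_sensitivity k v f = Max (sensitive_block_sizes k v f)"
  unfolding block_sensitivity_def sensitive_block_sizes_def by simp

lemma sensitive_block_sizes_le: "sensitive_block_sizes k v f \<subseteq> {..v choose k}"
proof
  fix x assume "x \<in> sensitive_block_sizes k v f"
  then obtain E \<B> where x: "x = card \<B>"
    and \<B>: "\<B> \<subseteq> Pow (hedges k v)" "pairwise disjnt \<B>" "\<forall>B\<in>\<B>. f (flip E B) \<noteq> f E"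
    unfolding sensitive_block_sizes_def by blast
  then show "x \<in> {..v choose k}" using card_sensitive_blocks_le[OF \<B>] by simp
qed

lemma finite_sensitive_block_sizes: "finite (sensitive_block_sizes k v f)"
  by (rule finite_subset[OF sensitive_block_sizes_le]) simp

lemma card_le_block_sensitivity:
  assumes "E \<in> hinputs k v" "\<B> \<subseteq> Pow (hedges k v)" "pairwise disjnt \<B>"
    "\<forall>B\<in>\<B>. f (flip E B) \<noteq> f E"
  shows "card \<B> \<le> block_sensitivity k v f"
proof -
  have "card \<B> \<in> sensitive_block_sizes k v f"
    unfolding sensitive_block_sizes_def by (intro CollectI exI[of _ E] exI[of _ \<B>]) (use assms in simp)
  then show ?thesis
    unfolding block_sensitivity_eq_Max by (rule Max_ge[OF finite_sensitive_block_sizes])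
qed

lemma block_sensitivity_le: "block_sensitivity k v f \<le> v choose k"
proof -
  have "0 \<in> sensitive_block_sizes k v f"
    unfolding sensitive_block_sizes_def
    by (intro CollectI exI[of _ "{}"] exI[of _ "{}"]) (simp add: hinputs_def)
  then show ?thesis
    unfolding block_sensitivity_eq_Max
    by (intro Max.boundedI[OF finite_sensitive_block_sizes]) (use sensitive_block_sizes_le in auto)
qed

definition add_apex :: "nat \<Rightarrow> nat set \<Rightarrow> nat set" where
  "add_apex n S = insert (n + \<Sum>S mod n) S"

text \<open>A common \<open>k\<close>-subset forces equal apexes and \<open>S1\<close>, \<open>S2\<close> differing in one element,
  which is then detected by the sums modulo \<open>n\<close>.\<close>

lemma ksubset_of_two_add_apex:
  assumes S1: "S1 \<subseteq> {0..<n}" "card S1 = k" and S2: "S2 \<subseteq> {0..<n}" "card S2 = k"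
    and e: "e \<subseteq> add_apex n S1" "e \<subseteq> add_apex n S2" "card e = k"
  shows "S1 = S2"
proof -
  let ?a1 = "n + \<Sum>S1 mod n" and ?a2 = "n + \<Sum>S2 mod n"
  have fin1: "finite S1" and fin2: "finite S2" using S1 S2 finite_subset by blast+
  have lt: "x < n" if "x \<in> S1 \<union> S2" for x using that S1 S2 by auto
  have apex: "?a1 \<notin> S1 \<union> S2" "?a2 \<notin> S1 \<union> S2" using lt[of ?a1] lt[of ?a2] by auto
  show ?thesis
  proof (cases "?a1 \<in> e")
    case False
    then have "e \<subseteq> S1" using e(1) unfolding add_apex_def by blast
    then have "e = S1" using card_subset_eq[OF fin1] e(3) S1(2) by simp
    then have "e \<subseteq> S2" using e(2) apex(2) unfolding add_apex_def by blast
    then have "e = S2" using card_subset_eq[OF fin2] e(3) S2(2) by simp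
    then show ?thesis using \<open>e = S1\<close> by simp
  next
    case True
    then have same_apex: "?a1 = ?a2" using e(2) apex(1) unfolding add_apex_def by blast
    define e' where "e' = e - {?a1}"
    have e'_sub: "e' \<subseteq> S1" "e' \<subseteq> S2"
      using e(1,2) same_apex unfolding e'_def add_apex_def by auto
    have "finite e'" using e'_sub fin1 finite_subset by blast
    have "finite e" using e(1) fin1 finite_subset unfolding add_apex_def by auto
    moreover have "e \<noteq> {}" using True by blast
    ultimately have "0 < card e" by (simp add: card_gt_0_iff)
    then have "k \<ge> 1" using e(3) by simp
    have "card e' = k - 1"
      using True e(3) unfolding e'_def by (simp add: card_Diff_singleton_if)
    then have "card (S1 - e') = 1" "card (S2 - e') = 1"
      using card_Diff_subset[OF \<open>finite e'\<close>] e'_sub S1(2) S2(2) \<open>k \<ge> 1\<close> by auto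
    then obtain x y where x: "S1 - e' = {x}" and y: "S2 - e' = {y}" by (meson card_1_singletonE)
    then have S1_eq: "S1 = insert x e'" "x \<notin> e'" and S2_eq: "S2 = insert y e'" "y \<notin> e'"
      using e'_sub by auto
    have "(\<Sum>e' + x) mod n = (\<Sum>e' + y) mod n"
      using same_apex S1_eq S2_eq \<open>finite e'\<close> by (simp add: add.commute)
    then have "[x = y] (mod n)" by (simp add: cong_def[symmetric] cong_add_lcancel_nat)
    moreover have "x < n" "y < n" using S1 S2 S1_eq S2_eq by auto
    ultimately have "x = y" by (rule cong_less_modulus_unique_nat)
    then show ?thesis using S1_eq S2_eq by simp
  qed
qed

lemma block_sensitivity_has_isolated_clique_ge:
  assumes k: "2 \<le> k"
  shows "(v div 2) choose k \<le> block_sensitivity k v (has_isolated_clique k v)"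
proof -
  define n where "n = v div 2"
  define \<S> where "\<S> = {S. S \<subseteq> {0..<n} \<and> card S = k}"
  define block where "block S = {e. e \<subseteq> add_apex n S \<and> card e = k}" for S
  have \<S>: "S \<subseteq> {0..<n}" "card S = k" "finite S" if "S \<in> \<S>" for S
    using that finite_subset unfolding \<S>_def by auto
  have apex_card: "card (add_apex n S) = Suc k" if "S \<in> \<S>" for S
    using \<S>[OF that] unfolding add_apex_def by (simp add: card_insert_if) force
  have apex_sub: "add_apex n S \<subseteq> {0..<v}" if "S \<in> \<S>" for S
  proof -
    have "n > 0" using \<S>[OF that] k by (metis card.empty atLeastLessThan_empty_iff2 neq0_conv
        not_numeral_le_zero subset_empty)
    then have "\<Sum>S mod n < n" by simp
    moreover have "2 * n \<le> v" unfolding n_def by simp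
    ultimately have "n + \<Sum>S mod n < v" by linarith
    then show ?thesis using \<S>[OF that] unfolding add_apex_def n_def by auto
  qed
  have sensitive: "has_isolated_clique k v (flip {} (block S)) \<noteq> has_isolated_clique k v {}"
    if "S \<in> \<S>" for S
  proof -
    have "flip {} (block S) = block S" unfolding flip_def by simp
    then show ?thesis
      using isolated_clique_ksubsets[OF apex_sub[OF that] apex_card[OF that]]
        not_has_isolated_clique_empty
      unfolding has_isolated_clique_def block_def by metis
  qed
  have same: "S1 = S2" if "S1 \<in> \<S>" "S2 \<in> \<S>" "e \<in> block S1" "e \<in> block S2" for S1 S2 e
    using ksubset_of_two_add_apex \<S>[OF that(1)] \<S>[OF that(2)] that(3,4) unfolding block_def by blast
  have own: "S \<in> block S" if "S \<in> \<S>" for S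
    using \<S>[OF that] unfolding block_def add_apex_def by auto
  have "inj_on block \<S>" using same own by (intro inj_onI) metis
  then have "card (block ` \<S>) = n choose k" unfolding \<S>_def by (simp add: card_image n_subsets)
  moreover have "card (block ` \<S>) \<le> block_sensitivity k v (has_isolated_clique k v)"
  proof (rule card_le_block_sensitivity)
    show "{} \<in> hinputs k v" unfolding hinputs_def by simp
    show "block ` \<S> \<subseteq> Pow (hedges k v)"
      using apex_sub unfolding block_def hedges_def by blast
    show "pairwise disjnt (block ` \<S>)"
      using same unfolding pairwise_def disjnt_def by blast
  qed (use sensitive in blast)
  ultimately show ?thesis unfolding n_def by simp
qed

lemma binomial_le_power: "n choose r \<le> n ^ r"
  by (cases "r \<le> n") (simp_all add: binomial_le_pow binomial_eq_0)

lemma sensitivity_has_isolated_clique_le_power: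
  assumes k: "2 \<le> k" and v: "1 \<le> v"
  shows "real (sensitivity k v (has_isolated_clique k v))
           \<le> real ((Suc k choose (k div 2)) + k + 2) * real v ^ ((k + 1) div 2)"
proof -
  let ?m = "(k + 1) div 2" and ?t = "k div 2"
  have "v choose ?t \<le> v ^ ?m"
    using binomial_le_power[of v ?t] power_increasing[of ?t ?m v] v by simp
  moreover have "v choose ?m \<le> v ^ ?m" by (rule binomial_le_power)
  ultimately have "(Suc k choose ?t) * (v choose ?m) + (k + 2) * (v choose ?t)
      \<le> (Suc k choose ?t) * v ^ ?m + (k + 2) * v ^ ?m"
    by (intro add_mono mult_le_mono2)
  also have "\<dots> = ((Suc k choose ?t) + k + 2) * v ^ ?m" by (simp add: algebra_simps)
  finally have "(Suc k choose ?t) * (v choose ?m) + (k + 2) * (v choose ?t)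
      \<le> ((Suc k choose ?t) + k + 2) * v ^ ?m" .
  moreover have "k - k div 2 = ?m" by simp
  ultimately have "sensitivity k v (has_isolated_clique k v) \<le> ((Suc k choose ?t) + k + 2) * v ^ ?m"
    using sensitivity_has_isolated_clique_le[OF k, of v] by simp
  then show ?thesis by (metis of_nat_le_iff of_nat_mult of_nat_power)
qed

lemma sensitivity_has_isolated_clique_ge_power:
  assumes k: "2 \<le> k" and v: "2 * Suc k \<le> v"
  shows "(1 / (2 * real ((k + 1) div 2))) ^ ((k + 1) div 2) * real v ^ ((k + 1) div 2)
           \<le> real (sensitivity k v (has_isolated_clique k v))"
proof -
  let ?m = "(k + 1) div 2"
  have m: "1 \<le> ?m" "?m \<le> v - Suc k" "k - k div 2 = ?m" using k v by simp_all
  have "(1 / (2 * real ?m)) ^ ?m * real v ^ ?m = (real v / (2 * real ?m)) ^ ?m"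
    by (simp add: power_divide power_mult_distrib)
  also have "\<dots> \<le> (real (v - Suc k) / real ?m) ^ ?m"
  proof (rule power_mono)
    have "real v \<le> 2 * real (v - Suc k)" using v by (simp add: of_nat_diff)
    then show "real v / (2 * real ?m) \<le> real (v - Suc k) / real ?m"
      using m(1) by (simp add: divide_simps)
  qed simp
  also have "\<dots> \<le> real ((v - Suc k) choose ?m)" by (rule binomial_ge_n_over_k_pow_k[OF m(2)])
  also have "\<dots> \<le> real (sensitivity k v (has_isolated_clique k v))"
    using sensitivity_has_isolated_clique_ge[OF k, of v] v m(3) by simp
  finally show ?thesis .
qed

lemma block_sensitivity_has_isolated_clique_ge_power:
  assumes k: "2 \<le> k" and v: "4 * k \<le> v"
  shows "(1 / (4 * real k)) ^ k * real v ^ k \<le> real (block_sensitivity k v (has_isolated_clique k v))"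
proof -
  have "(1 / (4 * real k)) ^ k * real v ^ k = (real v / (4 * real k)) ^ k"
    by (simp add: power_divide power_mult_distrib)
  also have "\<dots> \<le> (real (v div 2) / real k) ^ k"
  proof (rule power_mono)
    have "v \<le> 4 * (v div 2)" using v k by linarith
    then have "real v \<le> 4 * real (v div 2)" by linarith
    then show "real v / (4 * real k) \<le> real (v div 2) / real k"
      using k by (simp add: divide_simps)
  qed simp
  also have "\<dots> \<le> real ((v div 2) choose k)"
    by (rule binomial_ge_n_over_k_pow_k) (use v in linarith)
  also have "\<dots> \<le> real (block_sensitivity k v (has_isolated_clique k v))"
    using block_sensitivity_has_isolated_clique_ge[OF k] by simp
  finally show ?thesis .
qed

lemma sensitivity_has_isolated_clique_bigtheta:
  assumes k: "2 \<le> k"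
  shows "(\<lambda>v. real (sensitivity k v (has_isolated_clique k v))) \<in> \<Theta>(\<lambda>v. real v ^ ((k + 1) div 2))"
proof (rule bigthetaI')
  show "0 < (1 / (2 * real ((k + 1) div 2))) ^ ((k + 1) div 2)" using k by simp
  show "eventually (\<lambda>v. (1 / (2 * real ((k + 1) div 2))) ^ ((k + 1) div 2) * norm (real v ^ ((k + 1) div 2))
      \<le> norm (real (sensitivity k v (has_isolated_clique k v))) \<and>
      norm (real (sensitivity k v (has_isolated_clique k v)))
      \<le> real ((Suc k choose (k div 2)) + k + 2) * norm (real v ^ ((k + 1) div 2))) at_top"
    using eventually_ge_at_top[of "2 * Suc k"]
  proof eventually_elim
    case (elim v)
    then show ?case
      using sensitivity_has_isolated_clique_ge_power[OF k elim]
        sensitivity_has_isolated_clique_le_power[OF k, of v] by simp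
  qed
qed simp

lemma block_sensitivity_has_isolated_clique_bigtheta:
  assumes k: "2 \<le> k"
  shows "(\<lambda>v. real (block_sensitivity k v (has_isolated_clique k v))) \<in> \<Theta>(\<lambda>v. real v ^ k)"
proof (rule bigthetaI')
  show "0 < (1 / (4 * real k)) ^ k" using k by simp
  show "eventually (\<lambda>v. (1 / (4 * real k)) ^ k * norm (real v ^ k)
      \<le> norm (real (block_sensitivity k v (has_isolated_clique k v))) \<and>
      norm (real (block_sensitivity k v (has_isolated_clique k v))) \<le> 1 * norm (real v ^ k)) at_top"
    using eventually_ge_at_top[of "4 * k"]
  proof eventually_elim
    case (elim v)
    have "block_sensitivity k v (has_isolated_clique k v) \<le> v ^ k"
      using block_sensitivity_le binomial_le_power order.trans by blast
    then have "real (block_sensitivity k v (has_isolated_clique k v)) \<le> real v ^ k"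
      by (metis of_nat_le_iff of_nat_power)
    then show ?case using block_sensitivity_has_isolated_clique_ge_power[OF k elim] by simp
  qed
qed simp

theorem corollary4p5:
  fixes k :: nat
  assumes "k \<ge> 2"
  shows "\<exists>f :: nat \<Rightarrow> nat set set \<Rightarrow> bool.
     (\<forall>v. hyper_property k v (f v)) \<and>
     (\<lambda>v. real (sensitivity k v (f v))) \<in> \<Theta>(\<lambda>v. real v ^ ((k + 1) div 2)) \<and>
     (\<lambda>v. real (block_sensitivity k v (f v))) \<in> \<Theta>(\<lambda>v. real v ^ k) \<and>
     (even k \<longrightarrow>
       (\<lambda>v. real (block_sensitivity k v (f v))) \<in> \<Theta>(\<lambda>v. real (sensitivity k v (f v)) ^ 2))"
proof (intro exI[of _ "\<lambda>v. has_isolated_clique k v"] conjI allI impI)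
  let ?s = "\<lambda>v. real (sensitivity k v (has_isolated_clique k v))"
  show "hyper_property k v (has_isolated_clique k v)" for v
    by (rule hyper_property_has_isolated_clique)
  show s: "?s \<in> \<Theta>(\<lambda>v. real v ^ ((k + 1) div 2))"
    by (rule sensitivity_has_isolated_clique_bigtheta[OF assms])
  show bs: "(\<lambda>v. real (block_sensitivity k v (has_isolated_clique k v))) \<in> \<Theta>(\<lambda>v. real v ^ k)"
    by (rule block_sensitivity_has_isolated_clique_bigtheta[OF assms])
  assume "even k"
  then have "(k + 1) div 2 + (k + 1) div 2 = k" by auto
  then have "(\<lambda>v::nat. real v ^ ((k + 1) div 2) * real v ^ ((k + 1) div 2)) = (\<lambda>v. real v ^ k)"
    by (simp only: power_add[symmetric])
  then have "(\<lambda>v. ?s v ^ 2) \<in> \<Theta>(\<lambda>v. real v ^ k)"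
    using landau_theta.mult[OF s s] by (simp add: power2_eq_square)
  then show "(\<lambda>v. real (block_sensitivity k v (has_isolated_clique k v))) \<in> \<Theta>(\<lambda>v. ?s v ^ 2)"
    using bs landau_theta.bigtheta_trans1' by blast
qed

end
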